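(* For every $n\in\mathbb{N}$, $\mathcal{D}_{p/q}(\mu_n)=\mu_{n+1}$.
   Context: Let $p>q>1$ be coprime integers, $A_p=\{0,\dots,p-1\}$, $A_q=\{0,\dots,q-1\}$ and $B=\{p-(2q-1),\dots,p-1\}$. For $n\in\mathbb{N}$ and $a\in\mathbb{Z}$, let $\tau(n,a)=\frac{np+a}{q}$, defined only when $q$ divides $np+a$. Let $\mathcal{T}_{p/q}$ be the deterministic automaton with state set $\mathbb{N}$, alphabet $A_p$, initial state $0$, and transitions $n\xrightarrow{a}\tau(n,a)$ for $a\in A_p$ with $\tau(n,a)$ defined. Every state $n$ has exactly one outgoing transition labelled by a letter of $A_q$; the minimal word $\mu_n\in A_q^{\omega}$ is the unique infinite word over $A_q$ labelling a path of $\mathcal{T}_{p/q}$ starting at state $n$. For $a\in B$ let $\omega(a)=\{(b,c)\in A_q\times A_q : c-b=a-(p-q)\}$. The transducer $\mathcal{D}_{p/q}$ has state set $\mathbb{N}$, input and output alphabet $A_q$, initial state $0$, and a transition $n\xrightarrow{b|c}\tau(n,a)$ (input $b$, output $c$) for every $n\in\mathbb{N}$, $a\in B$ with $\tau(n,a)$ defined, and $(b,c)\in\omega(a)$; no other transitions. The image $\mathcal{D}_{p/q}(w)$ of an infinite word $w$ is the infinite word $w'$ such that for every finite prefix $u$ of $w$, the output produced along the path from state $0$ reading input $u$ is a prefix of $w'$. *)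

theory Defs
  imports Main
begin

text \<open>Infinite words over a digit alphabet are functions nat \<Rightarrow> nat.
  Parameters p, q are naturals with p > q > 1 coprime (assumed in the theorem).\<close>

text \<open>Transition of the automaton T_{p/q}: n --a--> m iff a \<in> A_p and
  q * m = n * p + a (i.e. q divides n p + a and m = tau(n,a)).\<close>
definition T_trans :: "nat \<Rightarrow> nat \<Rightarrow> nat \<Rightarrow> nat \<Rightarrow> nat \<Rightarrow> bool" where
  "T_trans p q n a m \<longleftrightarrow> a < p \<and> int q dvd (int n * int p + int a)
      \<and> int m = (int n * int p + int a) div int q"

definition T_path :: "nat \<Rightarrow> nat \<Rightarrow> nat \<Rightarrow> (nat \<Rightarrow> nat) \<Rightarrow> bool" where
  "T_path p q n w \<longleftrightarrow> (\<exists>s. s 0 = n \<and> (\<forall>i. T_trans p q (s i) (w i) (s (Suc i))))"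

text \<open>The minimal word mu_n: the unique infinite word over A_q labelling a path from n.\<close>
definition min_word :: "nat \<Rightarrow> nat \<Rightarrow> nat \<Rightarrow> (nat \<Rightarrow> nat)" where
  "min_word p q n = (THE w. (\<forall>i. w i < q) \<and> T_path p q n w)"

definition B_set :: "nat \<Rightarrow> nat \<Rightarrow> int set" where
  "B_set p q = {int p - (2 * int q - 1) .. int p - 1}"

text \<open>Transition of the transducer D_{p/q}: n --b|c--> m iff there is a \<in> B with
  tau(n,a) defined and equal to m, and (b,c) \<in> omega(a).\<close>
definition D_trans :: "nat \<Rightarrow> nat \<Rightarrow> nat \<Rightarrow> nat \<Rightarrow> nat \<Rightarrow> nat \<Rightarrow> bool" where
  "D_trans p q n b c m \<longleftrightarrow> (\<exists>a \<in> B_set p q.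
      int q dvd (int n * int p + a) \<and> int m = (int n * int p + a) div int q
      \<and> b < q \<and> c < q \<and> int c - int b = a - (int p - int q))"

definition D_run :: "nat \<Rightarrow> nat \<Rightarrow> (nat \<Rightarrow> nat) \<Rightarrow> nat \<Rightarrow> (nat \<Rightarrow> nat) \<Rightarrow> (nat \<Rightarrow> nat) \<Rightarrow> bool" where
  "D_run p q w k s c \<longleftrightarrow> s 0 = 0 \<and> (\<forall>i<k. D_trans p q (s i) (w i) (c i) (s (Suc i)))"

definition D_image :: "nat \<Rightarrow> nat \<Rightarrow> (nat \<Rightarrow> nat) \<Rightarrow> (nat \<Rightarrow> nat) \<Rightarrow> bool" where
  "D_image p q w w' \<longleftrightarrow> (\<forall>k. (\<exists>s c. D_run p q w k s c) \<and>
      (\<forall>s c. D_run p q w k s c \<longrightarrow> (\<forall>i<k. c i = w' i)))"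

end

theory Submission
  imports Defs
begin

text \<open>The minimal word \<open>\<mu>\<^sub>n\<close> is read off the deterministic run
  \<open>s\<^sub>0 = n\<close>, \<open>q s\<^sub>i\<^sub>+\<^sub>1 = p s\<^sub>i + b\<^sub>i\<close> with \<open>b\<^sub>i\<close> the unique digit below \<open>q\<close> making the
  division exact. The runs from \<open>n\<close> and \<open>n + 1\<close> stay strictly ordered, and the gap
  \<open>d\<^sub>i = t\<^sub>i - s\<^sub>i - 1\<close> between them satisfies \<open>q d\<^sub>i\<^sub>+\<^sub>1 = p d\<^sub>i + (c\<^sub>i - b\<^sub>i + p - q)\<close>, where
  \<open>c\<^sub>i - b\<^sub>i + p - q\<close> lies in \<open>B\<close>. So \<open>d\<close> is a run of \<open>\<D>\<^sub>p\<^sub>/\<^sub>q\<close> from \<open>0\<close> reading \<open>\<mu>\<^sub>n\<close> and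
  writing \<open>\<mu>\<^sub>n\<^sub>+\<^sub>1\<close>; since \<open>\<D>\<^sub>p\<^sub>/\<^sub>q\<close> is deterministic on its input, it is the only one.\<close>

definition min_digit :: "nat \<Rightarrow> nat \<Rightarrow> nat \<Rightarrow> nat" where
  "min_digit p q m = (q - (m * p) mod q) mod q"

fun min_state :: "nat \<Rightarrow> nat \<Rightarrow> nat \<Rightarrow> nat \<Rightarrow> nat" where
  "min_state p q n 0 = n"
| "min_state p q n (Suc i) = (min_state p q n i * p + min_digit p q (min_state p q n i)) div q"

lemma nat_eq_if_int_dvd_diff:
  assumes "x < q" "y < q" "int q dvd int x - int y"
  shows "x = y"
proof -
  have "int x mod int q = int y mod int q"
    using assms(3) by (simp add: mod_eq_dvd_iff)
  then show ?thesis using assms(1,2) by simp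
qed

lemma min_digit_less: "0 < q \<Longrightarrow> min_digit p q m < q"
  by (simp add: min_digit_def)

lemma dvd_add_min_digit:
  assumes "0 < q"
  shows "q dvd m * p + min_digit p q m"
proof (cases "(m * p) mod q = 0")
  case True
  then show ?thesis by (simp add: min_digit_def dvd_eq_mod_eq_0)
next
  case False
  define r where "r = (m * p) mod q"
  have "r < q" "m * p = q * (m * p div q) + r"
    using assms by (simp_all add: r_def)
  moreover have "min_digit p q m = q - r"
    using False \<open>r < q\<close> by (simp add: min_digit_def r_def)
  ultimately have "m * p + min_digit p q m = q * (m * p div q + 1)" by simp
  then show ?thesis by simp
qed

lemma min_digit_unique:
  assumes "0 < q" "a < q" "q dvd m * p + a"
  shows "a = min_digit p q m"
proof (rule nat_eq_if_int_dvd_diff)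
  have "int q dvd int (m * p + a) - int (m * p + min_digit p q m)"
    using assms(3) dvd_add_min_digit[OF assms(1)] by (metis dvd_diff of_nat_dvd_iff)
  then show "int q dvd int a - int (min_digit p q m)" by simp
qed (use assms min_digit_less in auto)

lemma min_state_Suc_mult:
  "0 < q \<Longrightarrow> q * min_state p q n (Suc i) = min_state p q n i * p + min_digit p q (min_state p q n i)"
  using dvd_add_min_digit[of q "min_state p q n i" p] by simp

lemma T_trans_iff_nat:
  "T_trans p q m a m' \<longleftrightarrow> a < p \<and> q dvd m * p + a \<and> m' = (m * p + a) div q"
proof -
  have "int m * int p + int a = int (m * p + a)" by simp
  then show ?thesis unfolding T_trans_def
    by (metis of_nat_dvd_iff of_nat_eq_iff zdiv_int)
qed

lemma min_word_eq:
  assumes "0 < q" "q \<le> p"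
  shows "min_word p q n = (\<lambda>i. min_digit p q (min_state p q n i))"
  unfolding min_word_def
proof (rule the_equality)
  show "(\<forall>i. min_digit p q (min_state p q n i) < q) \<and> T_path p q n (\<lambda>i. min_digit p q (min_state p q n i))"
    unfolding T_path_def using assms min_digit_less[of q p] dvd_add_min_digit[of q _ p]
    by (auto intro!: exI[of _ "min_state p q n"] simp: T_trans_iff_nat intro: less_le_trans)
next
  fix w assume w: "(\<forall>i. w i < q) \<and> T_path p q n w"
  then obtain s where s0: "s 0 = n" and sT: "\<And>i. T_trans p q (s i) (w i) (s (Suc i))"
    unfolding T_path_def by blast
  have "s i = min_state p q n i \<and> w i = min_digit p q (min_state p q n i)" for i
  proof (induction i)
    case 0
    then show ?case using s0 sT[of 0] w assms by (auto simp: T_trans_iff_nat intro: min_digit_unique)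
  next
    case (Suc i)
    then have "s (Suc i) = min_state p q n (Suc i)" using sT[of i] by (simp add: T_trans_iff_nat)
    then show ?case using sT[of "Suc i"] w assms by (auto simp: T_trans_iff_nat intro: min_digit_unique)
  qed
  then show "w = (\<lambda>i. min_digit p q (min_state p q n i))" by auto
qed

lemma min_state_less_min_state_Suc:
  assumes "0 < q" "q \<le> p"
  shows "min_state p q n i < min_state p q (Suc n) i"
proof (induction i)
  case 0
  then show ?case by simp
next
  case (Suc i)
  let ?s = "min_state p q n i" and ?t = "min_state p q (Suc n) i"
  have "?s * p + p \<le> ?t * p"
    using Suc by (metis Suc_leI add_mult_distrib mult_1 mult_le_mono1 plus_1_eq_Suc add.commute)
  moreover have "min_digit p q ?s < p" using assms min_digit_less by (blast intro: less_le_trans)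
  ultimately have "?s * p + min_digit p q ?s < ?t * p + min_digit p q ?t" by linarith
  then show ?case
    using min_state_Suc_mult[of q p n i] min_state_Suc_mult[of q p "Suc n" i] assms(1)
    by (metis mult_less_cancel1)
qed

lemma D_trans_gap:
  assumes "0 < q" "b < q" "c < q" "s < t" "s' < t'"
    and "q * s' = s * p + b" "q * t' = t * p + c"
  shows "D_trans p q (t - s - 1) b c (t' - s' - 1)"
proof -
  define a where "a = int c - int b + int p - int q"
  have gap: "int (t - s - 1) * int p + a = int q * int (t' - s' - 1)"
  proof -
    have "int (q * s') = int (s * p + b)" "int (q * t') = int (t * p + c)"
      using assms(6,7) by simp_all
    then show ?thesis using assms(4,5) by (simp add: a_def of_nat_diff algebra_simps)
  qed
  have "a \<in> B_set p q"
    using assms(2,3) unfolding a_def B_set_def by simp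
  moreover have "int q dvd int (t - s - 1) * int p + a"
    unfolding gap by simp
  moreover have "int (t' - s' - 1) = (int (t - s - 1) * int p + a) div int q"
    unfolding gap using assms(1) by simp
  ultimately show ?thesis
    unfolding D_trans_def using assms(2,3) by (auto simp: a_def)
qed

lemma D_trans_deterministic:
  assumes "D_trans p q m b c m'" "D_trans p q m b x y"
  shows "x = c \<and> y = m'"
proof -
  obtain a where da: "int q dvd int m * int p + a" and "c < q"
    and ma: "int m' = (int m * int p + a) div int q"
    and ca: "int c - int b = a - (int p - int q)"
    using assms(1) unfolding D_trans_def by blast
  obtain a' where da': "int q dvd int m * int p + a'" and "x < q"
    and ya: "int y = (int m * int p + a') div int q"
    and xa: "int x - int b = a' - (int p - int q)"
    using assms(2) unfolding D_trans_def by blast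
  have "int q dvd (int m * int p + a') - (int m * int p + a)"
    using da' da by (rule dvd_diff)
  also have "(int m * int p + a') - (int m * int p + a) = int x - int c"
    using ca xa by simp
  finally have "int q dvd int x - int c" .
  with \<open>x < q\<close> \<open>c < q\<close> have "x = c" by (rule nat_eq_if_int_dvd_diff)
  then have "a' = a" using ca xa by simp
  then show ?thesis using \<open>x = c\<close> ma ya by simp
qed

lemma D_image_if_run:
  assumes d0: "d 0 = 0" and step: "\<And>i. D_trans p q (d i) (w i) (w' i) (d (Suc i))"
  shows "D_image p q w w'"
  unfolding D_image_def
proof (intro allI conjI impI)
  fix k show "\<exists>s c. D_run p q w k s c"
    using assms unfolding D_run_def by blast
next
  fix k s c i assume run: "D_run p q w k s c" and "i < k"
  have "j \<le> k \<Longrightarrow> s j = d j" for j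
  proof (induction j)
    case 0
    then show ?case using run d0 by (simp add: D_run_def)
  next
    case (Suc j)
    then have "D_trans p q (d j) (w j) (c j) (s (Suc j))"
      using run unfolding D_run_def by (auto simp: Suc_le_eq)
    then show ?case using D_trans_deterministic step by blast
  qed
  then have "D_trans p q (d i) (w i) (c i) (s (Suc i))"
    using run \<open>i < k\<close> unfolding D_run_def by simp
  then show "c i = w' i" using D_trans_deterministic step by blast
qed

theorem mainTheorem3:
  fixes p q n :: nat
  assumes "q > 1" and "p > q" and "coprime p q"
  shows "D_image p q (min_word p q n) (min_word p q (Suc n))"
proof -
  have q: "0 < q" "q \<le> p" using assms(1,2) by simp_all
  define s where "s = min_state p q n"
  define t where "t = min_state p q (Suc n)"
  have "D_trans p q (t i - s i - 1) (min_digit p q (s i)) (min_digit p q (t i))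
          (t (Suc i) - s (Suc i) - 1)" for i
    unfolding s_def t_def
    by (intro D_trans_gap min_digit_less min_state_Suc_mult min_state_less_min_state_Suc q)
  then show ?thesis
    unfolding min_word_eq[OF q] s_def t_def
    by (intro D_image_if_run[where d = "\<lambda>i. t i - s i - 1"]) (simp_all add: s_def t_def)
qed

end
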